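(* Let $\pi$ be a $k$-permutation and $i,j\in\mathbb{N}_0$. If $i\le k-2$ and $j\le k-2$, then $$c_{i,j}(P_\pi)=\frac{k!\,(-1)^{i+j}}{i!\,j!\,(k-i-2)!\,(k-j-2)!}\left(\mathbf{b}_{i+2}^T\,A_\pi\,\mathbf{b}_{j+2}\right),$$ and otherwise $c_{i,j}(P_\pi)=0$.
   Context: A $k$-permutation is a bijection of $[k]=\{1,\dots,k\}$. Its gradient polynomial is $P_\pi(\alpha,\beta)=k!\sum_{m\in[k]}\left(\frac{k-m}{1-\alpha}-\frac{m-1}{\alpha}\right)\left(\frac{k-\pi(m)}{1-\beta}-\frac{\pi(m)-1}{\beta}\right)\frac{\alpha^{m-1}(1-\alpha)^{k-m}\beta^{\pi(m)-1}(1-\beta)^{k-\pi(m)}}{(m-1)!(k-m)!(\pi(m)-1)!(k-\pi(m))!}$ (a polynomial in $\alpha,\beta$). For a polynomial $P(\alpha,\beta)$, $c_{i,j}(P)$ is the coefficient of $\alpha^i\beta^j$. The permutation matrix $A_\pi\in\mathbb{R}^{k\times k}$ has $(A_\pi)_{i,j}=1$ if $\pi(i)=j$ and $0$ otherwise. For $a\in[k]$, $\mathbf{b}_a=\mathbf{b}^k_a\in\mathbb{R}^k$ is the column vector with $(\mathbf{b}_a)_\ell=(-1)^{\ell-1}\binom{a-1}{\ell-1}$ for $1\le\ell\le a$ and $(\mathbf{b}_a)_\ell=0$ for $\ell>a$. *)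

theory Defs
  imports "HOL-Computational_Algebra.Polynomial" "HOL-Combinatorics.Permutations"
begin

text \<open>Bivariate real polynomials in \<alpha>, \<beta> are represented as \<open>real poly poly\<close>:
  the outer variable is \<beta>, the coefficients are polynomials in \<alpha>.\<close>

definition c_coeff :: "real poly poly \<Rightarrow> nat \<Rightarrow> nat \<Rightarrow> real" where
  "c_coeff P i j = coeff (coeff P j) i"

text \<open>The polynomial (in one variable x) equal to
  ((k-m)/(1-x) - (m-1)/x) * x^(m-1) * (1-x)^(k-m),
  the divisions being carried out exactly (the terms vanish when k-m = 0, resp. m-1 = 0).\<close>
definition grad_factor :: "nat \<Rightarrow> nat \<Rightarrow> real poly" where
  "grad_factor k m =
     (if m < k then smult (real (k - m)) (monom 1 (m - 1) * [:1, -1:] ^ (k - m - 1)) else 0)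
   - (if 1 < m then smult (real (m - 1)) (monom 1 (m - 2) * [:1, -1:] ^ (k - m)) else 0)"

definition gradient_poly :: "nat \<Rightarrow> (nat \<Rightarrow> nat) \<Rightarrow> real poly poly" where
  "gradient_poly k \<pi> =
     (\<Sum>m\<in>{1..k}.
        smult (smult (fact k / (fact (m - 1) * fact (k - m) * fact (\<pi> m - 1) * fact (k - \<pi> m)))
                     (grad_factor k m))
              (map_poly (\<lambda>c. [:c:]) (grad_factor k (\<pi> m))))"

definition perm_matrix :: "(nat \<Rightarrow> nat) \<Rightarrow> nat \<Rightarrow> nat \<Rightarrow> real" where
  "perm_matrix \<pi> i j = (if \<pi> i = j then 1 else 0)"

definition bvec :: "nat \<Rightarrow> nat \<Rightarrow> real" where
  "bvec a l = (if 1 \<le> l \<and> l \<le> a then (-1) ^ (l - 1) * real ((a - 1) choose (l - 1)) else 0)"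

definition bilin :: "nat \<Rightarrow> (nat \<Rightarrow> real) \<Rightarrow> (nat \<Rightarrow> nat \<Rightarrow> real) \<Rightarrow> (nat \<Rightarrow> real) \<Rightarrow> real" where
  "bilin k u A v = (\<Sum>l\<in>{1..k}. \<Sum>l'\<in>{1..k}. u l * A l l' * v l')"

end

theory Submission
  imports Defs
begin

text \<open>The factor \<open>grad_factor k m\<close> is minus the derivative of the Bernstein-type monomial
  \<open>x^(m-1) (1-x)^(k-m)\<close>, so its \<open>i\<close>-th coefficient is \<open>-(i+1)\<close> times a single binomial
  coefficient of \<open>(1-x)^(k-m)\<close>. Rewriting that coefficient with factorials splits it into a
  factor depending only on \<open>i\<close> and \<open>k\<close> and the entry \<open>(-1)^(m-1) C(i+1, m-1)\<close> of \<open>b_(i+2)\<close>.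
  The coefficient of \<open>\<alpha>^i \<beta>^j\<close> in \<open>P_\<pi>\<close> is a sum over \<open>m\<close> of products of two such
  coefficients, and the factors depending on \<open>m\<close> assemble into \<open>b_(i+2)^T A_\<pi> b_(j+2)\<close>.\<close>

lemma coeff_one_minus_x_power:
  "coeff ([:1, -1:] ^ b :: 'a :: comm_ring_1 poly) n = (-1) ^ n * of_nat (b choose n)"
proof (cases "n \<le> b")
  case True
  then show ?thesis by (simp add: coeff_linear_poly_power)
next
  case False
  then have "degree ([:1, -1:] ^ b :: 'a poly) < n"
    using degree_power_le[of "[:1, -1:] :: 'a poly" b] by simp
  then show ?thesis using False by (simp add: coeff_eq_0 binomial_eq_0)
qed

lemma coeff_monom_mult_one_minus_x_power:
  "coeff (monom (1 :: 'a :: comm_ring_1) a * [:1, -1:] ^ b) n =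
     (if a \<le> n then (-1) ^ (n - a) * of_nat (b choose (n - a)) else 0)"
  by (simp add: coeff_monom_mult coeff_one_minus_x_power)

lemma grad_factor_eq_neg_pderiv:
  "grad_factor (a + b + 1) (a + 1) = - pderiv (monom 1 a * [:1, -1:] ^ b)"
proof -
  have "pderiv (monom (1 :: real) a * [:1, -1:] ^ b) =
     smult (real a) (monom 1 (a - 1) * [:1, -1:] ^ b)
     - smult (real b) (monom 1 a * [:1, -1:] ^ (b - 1))"
    by (simp add: pderiv_mult pderiv_power pderiv_monom pderiv_pCons algebra_simps monom_altdef
        flip: smult_monom)
  then show ?thesis
    unfolding grad_factor_def by (cases "a = 0"; cases "b = 0") (auto simp: algebra_simps)
qed

lemma coeff_grad_factor:
  "coeff (grad_factor (a + b + 1) (a + 1)) i =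
     (if a \<le> Suc i then - real (Suc i) * (-1) ^ (Suc i - a) * real (b choose (Suc i - a)) else 0)"
  unfolding grad_factor_eq_neg_pderiv coeff_minus coeff_pderiv
    coeff_monom_mult_one_minus_x_power
  by (simp add: algebra_simps)

lemma binomial_coeff_split:
  assumes "a + s = Suc i" "s \<le> b"
  shows "- real (Suc i) * (-1) ^ s * real (b choose s) =
    fact a * fact b * (-1) ^ i / (fact i * fact (b - s)) * ((-1) ^ a * real (Suc i choose a))"
proof -
  have sign: "(-1 :: real) ^ i * (-1) ^ a = - ((-1) ^ s)"
  proof -
    have "even (i + a) = odd s" using assms(1) by presburger
    then show ?thesis by (auto simp: minus_one_power_iff simp flip: power_add)
  qed
  have "Suc i - a = s" using assms(1) by simp
  then have choose_Suc_i: "real (Suc i choose a) = fact (Suc i) / (fact a * fact s)"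
    using binomial_fact[of a "Suc i"] assms(1) by simp
  have "fact a * fact b * (-1) ^ i / (fact i * fact (b - s)) * ((-1) ^ a * real (Suc i choose a))
      = ((-1) ^ i * (-1) ^ a) * (fact (Suc i) / fact i) * (fact b / (fact s * fact (b - s)))"
    unfolding choose_Suc_i by (simp add: field_simps)
  also have "\<dots> = - real (Suc i) * (-1) ^ s * real (b choose s)"
    unfolding sign binomial_fact[OF assms(2)] fact_Suc by (simp add: divide_simps algebra_simps)
  finally show ?thesis ..
qed

lemma coeff_grad_factor_bvec:
  assumes "1 \<le> m" "m \<le> k"
  shows "coeff (grad_factor k m) i =
    (if i + 2 \<le> k
     then fact (m - 1) * fact (k - m) * (-1) ^ i / (fact i * fact (k - i - 2)) * bvec (i + 2) m
     else 0)"
proof -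
  define a b where "a = m - 1" and "b = k - m"
  have ab: "m = a + 1" "k = a + b + 1"
    using assms unfolding a_def b_def by auto
  show ?thesis
  proof (cases "a \<le> Suc i \<and> Suc i - a \<le> b")
    case False
    then show ?thesis
      unfolding ab coeff_grad_factor by (auto simp: bvec_def)
  next
    case True
    define s where "s = Suc i - a"
    have s: "a + s = Suc i" "s \<le> b" "k - i - 2 = b - s"
      using True ab unfolding s_def by auto
    have "bvec (i + 2) m = (-1) ^ a * real (Suc i choose a)"
      unfolding bvec_def ab using True by simp
    then show ?thesis
      using True s binomial_coeff_split[OF s(1,2)]
      unfolding ab coeff_grad_factor s_def[symmetric] by simp
  qed
qed

lemma c_coeff_gradient_poly:
  "c_coeff (gradient_poly k \<pi>) i j =
    (\<Sum>m\<in>{1..k}. fact k / (fact (m - 1) * fact (k - m) * fact (\<pi> m - 1) * fact (k - \<pi> m))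
      * coeff (grad_factor k m) i * coeff (grad_factor k (\<pi> m)) j)"
  unfolding c_coeff_def gradient_poly_def coeff_sum
  by (simp add: coeff_map_poly mult_ac)

lemma gradient_poly_summand:
  assumes "1 \<le> m" "m \<le> k" "1 \<le> m'" "m' \<le> k"
  shows "fact k / (fact (m - 1) * fact (k - m) * fact (m' - 1) * fact (k - m'))
      * coeff (grad_factor k m) i * coeff (grad_factor k m') j =
    (if i + 2 \<le> k \<and> j + 2 \<le> k
     then fact k * (-1) ^ (i + j) / (fact i * fact j * fact (k - i - 2) * fact (k - j - 2))
          * (bvec (i + 2) m * bvec (j + 2) m')
     else 0)"
  using assms by (auto simp: coeff_grad_factor_bvec power_add field_simps)

lemma bilin_perm_matrix:
  assumes "\<pi> permutes {1..k}"
  shows "bilin k u (perm_matrix \<pi>) v = (\<Sum>l\<in>{1..k}. u l * v (\<pi> l))"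
  unfolding bilin_def
proof (rule sum.cong[OF refl])
  fix l assume l: "l \<in> {1..k}"
  have "(\<Sum>l'\<in>{1..k}. u l * perm_matrix \<pi> l l' * v l') =
      (\<Sum>l'\<in>{1..k}. if \<pi> l = l' then u l * v l' else 0)"
    by (rule sum.cong) (auto simp: perm_matrix_def)
  also have "\<dots> = u l * v (\<pi> l)"
    using l permutes_in_image[OF assms] by (simp add: sum.delta)
  finally show "(\<Sum>l'\<in>{1..k}. u l * perm_matrix \<pi> l l' * v l') = u l * v (\<pi> l)" .
qed

theorem lemma7:
  fixes k :: nat and \<pi> :: "nat \<Rightarrow> nat" and i j :: nat
  assumes "\<pi> permutes {1..k}"
  shows "c_coeff (gradient_poly k \<pi>) i j =
    (if i + 2 \<le> k \<and> j + 2 \<le> k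
     then fact k * (-1) ^ (i + j) / (fact i * fact j * fact (k - i - 2) * fact (k - j - 2))
          * bilin k (bvec (i + 2)) (perm_matrix \<pi>) (bvec (j + 2))
     else 0)"
proof -
  define K :: real
    where "K = fact k * (-1) ^ (i + j) / (fact i * fact j * fact (k - i - 2) * fact (k - j - 2))"
  have "c_coeff (gradient_poly k \<pi>) i j =
      (\<Sum>m\<in>{1..k}. if i + 2 \<le> k \<and> j + 2 \<le> k
                    then K * (bvec (i + 2) m * bvec (j + 2) (\<pi> m)) else 0)"
    unfolding c_coeff_gradient_poly K_def
    using permutes_in_image[OF assms]
    by (intro sum.cong refl gradient_poly_summand) auto
  then show ?thesis
    unfolding K_def[symmetric]
    by (cases "i + 2 \<le> k \<and> j + 2 \<le> k") (auto simp: bilin_perm_matrix[OF assms] sum_distrib_left)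
qed

end
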